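(* For every real $n\ge2$, \[ \max_{a\in[0,1]}\Bigl((n-1)e^{\frac{1-a^2}{n}}+e^{\frac{1-(n(1-a)+a)^2}{n}}\Bigr)\le n. \] *)

theory Defs
  imports "HOL-Analysis.Analysis"
begin

end

theory Submission
  imports Defs
begin

text \<open>
  Write \<open>c = n(1 - a) + a\<close>. The function is \<open>n\<close> at \<open>a = 1\<close> and increasing at \<open>a = 0\<close>, so it
  suffices to bound its values at interior critical points. There
  \<open>a e\<^bsup>(1-a\<^sup>2)/n\<^esup> = c e\<^bsup>(1-c\<^sup>2)/n\<^esup>\<close>, which turns the value into
  \<open>e\<^bsup>(1-a\<^sup>2)/n\<^esup> ((n - 1) c + a) / c\<close>; this is at most \<open>n\<close> by the Pad\<acute>e bound
  \<open>ln (1 + x) \<ge> 2x / (2 + x)\<close> and a quadratic inequality in \<open>a\<close>.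
\<close>

lemma le_on_interval_if_le_at_critical_points:
  fixes f f' :: "real \<Rightarrow> real"
  assumes "lo < hi"
    and deriv: "\<And>x. lo \<le> x \<Longrightarrow> x \<le> hi \<Longrightarrow> (f has_real_derivative f' x) (at x)"
    and "f' lo > 0" and "f hi \<le> M"
    and critical: "\<And>x. lo < x \<Longrightarrow> x < hi \<Longrightarrow> f' x = 0 \<Longrightarrow> f x \<le> M"
  shows "\<forall>x\<in>{lo..hi}. f x \<le> M"
proof -
  have "continuous_on {lo..hi} f"
    using deriv by (intro continuous_at_imp_continuous_on ballI DERIV_isCont) auto
  then obtain x0 where x0: "x0 \<in> {lo..hi}" and max: "\<forall>y\<in>{lo..hi}. f y \<le> f x0"
    using continuous_attains_sup[of "{lo..hi}" f] \<open>lo < hi\<close> by auto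
  have "f x0 \<le> M"
  proof -
    consider "x0 = hi" | "x0 = lo" | "lo < x0" "x0 < hi"
      using x0 by force
    then show ?thesis
    proof cases
      case 1
      then show ?thesis using \<open>f hi \<le> M\<close> by simp
    next
      case 2
      obtain d where "d > 0" and incr: "\<forall>h>0. h < d \<longrightarrow> f lo < f (lo + h)"
        using DERIV_pos_inc_right[OF deriv \<open>f' lo > 0\<close>] \<open>lo < hi\<close> by auto
      define h where "h = min (d / 2) (hi - lo)"
      have "f lo < f (lo + h)" and "lo + h \<in> {lo..hi}"
        using incr \<open>d > 0\<close> \<open>lo < hi\<close> unfolding h_def by auto
      with max 2 show ?thesis by fastforce
    next
      case 3
      have "\<forall>y. \<bar>x0 - y\<bar> < min (x0 - lo) (hi - x0) \<longrightarrow> f y \<le> f x0"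
        using max by (auto simp: abs_if)
      moreover have "(f has_real_derivative f' x0) (at x0)" and "min (x0 - lo) (hi - x0) > 0"
        using deriv 3 by auto
      ultimately have "f' x0 = 0"
        using DERIV_local_max by blast
      with critical 3 show ?thesis by blast
    qed
  qed
  with max show ?thesis by auto
qed

lemma ln_one_plus_ge_pade:
  fixes x :: real
  assumes "x \<ge> 0"
  shows "2 * x / (2 + x) \<le> ln (1 + x)"
proof -
  let ?k = "\<lambda>t::real. ln (1 + t) - 2 * t / (2 + t)"
  have "?k 0 \<le> ?k x"
  proof (rule DERIV_nonneg_imp_nondecreasing[OF assms])
    fix t :: real assume t: "0 \<le> t" "t \<le> x"
    have "(?k has_real_derivative (1 / (1 + t) - (2 * (2 + t) - 2 * t) / (2 + t)^2)) (at t)"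
      using t by (auto intro!: derivative_eq_intros simp: power2_eq_square)
    moreover have "1 / (1 + t) - (2 * (2 + t) - 2 * t) / (2 + t)^2 = t^2 / ((1 + t) * (2 + t)^2)"
      using t by (simp add: divide_simps power2_eq_square) (simp add: algebra_simps)
    moreover have "t^2 / ((1 + t) * (2 + t)^2) \<ge> 0"
      using t by simp
    ultimately show "\<exists>y. (?k has_real_derivative y) (at t) \<and> 0 \<le> y"
      by auto
  qed
  then show ?thesis by simp
qed

lemma pade_quadratic_bound:
  fixes n a :: real
  assumes "n \<ge> 2"
  shows "(1 + a) * ((2 * n - 1) * (n * (1 - a) + a) + a) \<le> 2 * n^2"
proof -
  define m where "m = n - 1"
  define b where "b = 1 - a"
  have "(1 + a) * ((2 * n - 1) * (n * (1 - a) + a) + a) - 2 * n^2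
        = - n * (((2 * m - 1) * b - 2 * (m - 1))^2 + 2 * (m - 1)) / (2 * m - 1)"
    unfolding m_def b_def using assms by (simp add: field_simps power2_eq_square)
  also have "\<dots> \<le> 0"
    unfolding m_def using assms by (intro divide_nonpos_pos mult_nonpos_nonneg add_nonneg_nonneg) auto
  finally show ?thesis by simp
qed

lemma interpolation_ge_one:
  fixes n a :: real
  assumes "n \<ge> 1" "a \<le> 1"
  shows "n * (1 - a) + a \<ge> 1"
proof -
  have "(n - 1) * (1 - a) \<ge> 0"
    using assms by simp
  then show ?thesis by (simp add: algebra_simps)
qed

lemma exp_critical_value_bound:
  fixes n a :: real
  assumes n: "n \<ge> 2" and a: "0 \<le> a" "a \<le> 1"
  defines "c \<equiv> n * (1 - a) + a"
  shows "exp ((1 - a^2) / n) * ((n - 1) * c + a) \<le> n * c"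
proof -
  define s where "s = (n - 1) * c + a"
  define x where "x = (c - a) / s"
  have "c \<ge> 1"
    unfolding c_def using interpolation_ge_one n a by simp
  then have s: "s > 0" and d: "(2 * n - 1) * c + a > 0"
    using n a unfolding s_def by (smt (verit) mult_le_cancel_left1)+
  have x: "x \<ge> 0"
    unfolding x_def c_def using s n a by simp
  have one_plus_x: "1 + x = n * c / s"
    unfolding x_def using s by (simp add: field_simps s_def)
  have "2 + x = ((2 * n - 1) * c + a) / s"
    unfolding x_def using s by (simp add: field_simps s_def)
  then have pade_arg: "2 * x / (2 + x) = 2 * n * (1 - a) / ((2 * n - 1) * c + a)"
    unfolding x_def using s by (simp add: c_def)
  have "(1 - a^2) * ((2 * n - 1) * c + a) \<le> 2 * n * (1 - a) * n"
  proof -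
    have "(1 - a^2) * ((2 * n - 1) * c + a) = (1 - a) * ((1 + a) * ((2 * n - 1) * c + a))"
      by (simp add: algebra_simps power2_eq_square)
    also have "\<dots> \<le> (1 - a) * (2 * n^2)"
      using pade_quadratic_bound[OF n, of a] a unfolding c_def by (intro mult_left_mono) auto
    finally show ?thesis by (simp add: power2_eq_square algebra_simps)
  qed
  then have "(1 - a^2) * ((2 * n - 1) * c + a) / (n * ((2 * n - 1) * c + a))
             \<le> 2 * n * (1 - a) * n / (n * ((2 * n - 1) * c + a))"
    using d n by (intro divide_right_mono) auto
  then have "(1 - a^2) / n \<le> 2 * x / (2 + x)"
    unfolding pade_arg using d n by simp
  also have "\<dots> \<le> ln (1 + x)"
    using ln_one_plus_ge_pade[OF x] .
  finally have "exp ((1 - a^2) / n) \<le> exp (ln (1 + x))"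
    by simp
  then have "exp ((1 - a^2) / n) \<le> n * c / s"
    using x one_plus_x by simp
  then show ?thesis
    using s unfolding s_def by (simp add: field_simps)
qed

theorem proposition3p2:
  fixes n :: real
  assumes "n \<ge> 2"
  shows "\<forall>a\<in>{0..1::real}. (n - 1) * exp ((1 - a^2) / n) + exp ((1 - (n * (1 - a) + a)^2) / n) \<le> n"
proof (rule le_on_interval_if_le_at_critical_points)
  let ?c = "\<lambda>a::real. n * (1 - a) + a"
  let ?f' = "\<lambda>a. 2 * (n - 1) / n * (?c a * exp ((1 - (?c a)^2) / n) - a * exp ((1 - a^2) / n))"
  show "((\<lambda>a. (n - 1) * exp ((1 - a^2) / n) + exp ((1 - (?c a)^2) / n))
          has_real_derivative ?f' a) (at a)" for a
    using assms by (auto intro!: derivative_eq_intros simp: field_simps power2_eq_square)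
  show "?f' 0 > 0"
    using assms by simp
  show "(n - 1) * exp ((1 - a^2) / n) + exp ((1 - (?c a)^2) / n) \<le> n"
    if "0 < a" "a < 1" "?f' a = 0" for a
  proof -
    have "?c a \<ge> 1"
      using interpolation_ge_one assms that by simp
    have "?c a * exp ((1 - (?c a)^2) / n) = a * exp ((1 - a^2) / n)"
      using that assms by simp
    then have "((n - 1) * exp ((1 - a^2) / n) + exp ((1 - (?c a)^2) / n)) * ?c a
               = exp ((1 - a^2) / n) * ((n - 1) * ?c a + a)"
      by (simp add: algebra_simps)
    also have "\<dots> \<le> n * ?c a"
      using exp_critical_value_bound[OF assms] that by simp
    finally show ?thesis
      using \<open>?c a \<ge> 1\<close> by simp
  qed
qed (use assms in simp_all)

end
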